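(* Let $\Gamma$ be a connected $\mathbb Z$-leg-weighted graph. Then the set of cones $\{c_w : w\in W(\Gamma)\}$ is finite.
   Context: A graph consists of finite sets $V$ (vertices) and $H$ (half-edges), a map $\mathrm{end}\colon H\to V$, an involution $i$ of $H$, a genus $g\colon V\to\mathbb Z_{\ge0}$ and an integer twist $k$. Legs are fixed points of $i$; edges are pairs $\{h,i(h)\}$, $h\ne i(h)$; a directed edge is a non-leg half-edge $h$ from $\mathrm{end}(h)$ to $\mathrm{end}(i(h))$. $\mathrm{val}(v)$ is the number of non-leg half-edges at $v$, $\kappa(v)=2g(v)-2+\mathrm{val}(v)$, and $g(\Gamma)=b_1(\Gamma)+\sum_v g(v)$. A cycle is a closed walk of directed edges repeating no vertex or undirected edge. A weighting is $w\colon H\to\mathbb Z$ with $w(h)+w(i(h))=0$ for $h\ne i(h)$ and $\sum_{\mathrm{end}(h)=v}w(h)+k\kappa(v)=0$ for all $v$. A leg-weighted graph has given integer values on the legs summing to $-k(2g(\Gamma)-2)$; $W(\Gamma)$ is the set of weightings restricting to these values. For a directed edge $e$ of a cycle $\gamma$, $w_\gamma(e)$ is the value of $w$ on the half-edge of $e$ at its source. For $E$ the edge set, $c_w\subseteq\mathbb Q_{\ge0}^E$ is the cone of $t$ with $\sum_{e\in\gamma}w_\gamma(e)t(e)=0$ for every cycle $\gamma$. *)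

theory Defs
  imports Complex_Main
begin

text \<open>A graph: vertex set V, half-edge set H, end map endp, involution iv on H,
  genus gv on vertices, twist k.\<close>

definition is_graph :: "'v set \<Rightarrow> 'h set \<Rightarrow> ('h \<Rightarrow> 'v) \<Rightarrow> ('h \<Rightarrow> 'h) \<Rightarrow> bool" where
  "is_graph V H endp iv \<longleftrightarrow> finite V \<and> finite H \<and> (\<forall>h\<in>H. endp h \<in> V)
     \<and> (\<forall>h\<in>H. iv h \<in> H \<and> iv (iv h) = h)"

definition legs :: "'h set \<Rightarrow> ('h \<Rightarrow> 'h) \<Rightarrow> 'h set" where
  "legs H iv = {h\<in>H. iv h = h}"

definition edges :: "'h set \<Rightarrow> ('h \<Rightarrow> 'h) \<Rightarrow> 'h set set" where
  "edges H iv = {{h, iv h} | h. h \<in> H \<and> iv h \<noteq> h}"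

definition val :: "'h set \<Rightarrow> ('h \<Rightarrow> 'v) \<Rightarrow> ('h \<Rightarrow> 'h) \<Rightarrow> 'v \<Rightarrow> nat" where
  "val H endp iv v = card {h\<in>H. endp h = v \<and> iv h \<noteq> h}"

definition kappa :: "'h set \<Rightarrow> ('h \<Rightarrow> 'v) \<Rightarrow> ('h \<Rightarrow> 'h) \<Rightarrow> ('v \<Rightarrow> nat) \<Rightarrow> 'v \<Rightarrow> int" where
  "kappa H endp iv gv v = 2 * int (gv v) - 2 + int (val H endp iv v)"

definition adj :: "'h set \<Rightarrow> ('h \<Rightarrow> 'v) \<Rightarrow> ('h \<Rightarrow> 'h) \<Rightarrow> ('v \<times> 'v) set" where
  "adj H endp iv = {(endp h, endp (iv h)) | h. h \<in> H \<and> iv h \<noteq> h}"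

definition connected_graph :: "'v set \<Rightarrow> 'h set \<Rightarrow> ('h \<Rightarrow> 'v) \<Rightarrow> ('h \<Rightarrow> 'h) \<Rightarrow> bool" where
  "connected_graph V H endp iv \<longleftrightarrow> V \<noteq> {} \<and> (\<forall>u\<in>V. \<forall>v\<in>V. (u, v) \<in> (adj H endp iv)\<^sup>*)"

definition n_components :: "'v set \<Rightarrow> 'h set \<Rightarrow> ('h \<Rightarrow> 'v) \<Rightarrow> ('h \<Rightarrow> 'h) \<Rightarrow> nat" where
  "n_components V H endp iv = card (V // ((adj H endp iv)\<^sup>* \<inter> V \<times> V))"

definition betti1 :: "'v set \<Rightarrow> 'h set \<Rightarrow> ('h \<Rightarrow> 'v) \<Rightarrow> ('h \<Rightarrow> 'h) \<Rightarrow> int" where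
  "betti1 V H endp iv = int (card (edges H iv)) - int (card V) + int (n_components V H endp iv)"

definition graph_genus :: "'v set \<Rightarrow> 'h set \<Rightarrow> ('h \<Rightarrow> 'v) \<Rightarrow> ('h \<Rightarrow> 'h) \<Rightarrow> ('v \<Rightarrow> nat) \<Rightarrow> int" where
  "graph_genus V H endp iv gv = betti1 V H endp iv + (\<Sum>v\<in>V. int (gv v))"

definition leg_weighted :: "'v set \<Rightarrow> 'h set \<Rightarrow> ('h \<Rightarrow> 'v) \<Rightarrow> ('h \<Rightarrow> 'h) \<Rightarrow> ('v \<Rightarrow> nat) \<Rightarrow> int
    \<Rightarrow> ('h \<Rightarrow> int) \<Rightarrow> bool" where
  "leg_weighted V H endp iv gv k lw \<longleftrightarrow>
     (\<Sum>h\<in>legs H iv. lw h) = - k * (2 * graph_genus V H endp iv gv - 2)"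

definition is_weighting :: "'v set \<Rightarrow> 'h set \<Rightarrow> ('h \<Rightarrow> 'v) \<Rightarrow> ('h \<Rightarrow> 'h) \<Rightarrow> ('v \<Rightarrow> nat) \<Rightarrow> int
    \<Rightarrow> ('h \<Rightarrow> int) \<Rightarrow> bool" where
  "is_weighting V H endp iv gv k w \<longleftrightarrow>
     (\<forall>h\<in>H. iv h \<noteq> h \<longrightarrow> w h + w (iv h) = 0) \<and>
     (\<forall>v\<in>V. (\<Sum>h\<in>{h\<in>H. endp h = v}. w h) + k * kappa H endp iv gv v = 0)"

definition weightings :: "'v set \<Rightarrow> 'h set \<Rightarrow> ('h \<Rightarrow> 'v) \<Rightarrow> ('h \<Rightarrow> 'h) \<Rightarrow> ('v \<Rightarrow> nat) \<Rightarrow> int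
    \<Rightarrow> ('h \<Rightarrow> int) \<Rightarrow> ('h \<Rightarrow> int) set" where
  "weightings V H endp iv gv k lw =
     {w. is_weighting V H endp iv gv k w \<and> (\<forall>h\<in>legs H iv. w h = lw h)}"

text \<open>A cycle: a nonempty list of directed edges (non-leg half-edges, each at its source),
  consecutive (cyclically), with no repeated vertex and no repeated undirected edge.\<close>
definition is_cycle :: "'h set \<Rightarrow> ('h \<Rightarrow> 'v) \<Rightarrow> ('h \<Rightarrow> 'h) \<Rightarrow> 'h list \<Rightarrow> bool" where
  "is_cycle H endp iv c \<longleftrightarrow> c \<noteq> [] \<and> set c \<subseteq> H \<and> (\<forall>h\<in>set c. iv h \<noteq> h) \<and>
     (\<forall>j<length c. endp (iv (c ! j)) = endp (c ! ((j + 1) mod length c))) \<and>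
     distinct (map endp c) \<and> distinct (map (\<lambda>h. {h, iv h}) c)"

text \<open>The cone c_w in Q_{>=0}^E; elements are functions on undirected edges, zero off E.\<close>
definition cone_w :: "'h set \<Rightarrow> ('h \<Rightarrow> 'v) \<Rightarrow> ('h \<Rightarrow> 'h) \<Rightarrow> ('h \<Rightarrow> int) \<Rightarrow> ('h set \<Rightarrow> rat) set" where
  "cone_w H endp iv w = {t. (\<forall>e. e \<notin> edges H iv \<longrightarrow> t e = 0) \<and> (\<forall>e\<in>edges H iv. 0 \<le> t e) \<and>
     (\<forall>c. is_cycle H endp iv c \<longrightarrow>
        (\<Sum>j<length c. of_int (w (c ! j)) * t {c ! j, iv (c ! j)}) = 0)}"

end

theory Submission
  imports Defs
begin

text \<open>
  Let \<open>B\<close> be the sum of all \<open>|k \<kappa>(v)|\<close> and all \<open>|lw(h)|\<close>. If some \<open>t \<in> c\<^sub>w\<close> is positive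
  on an edge whose half-edge \<open>h\<^sub>0\<close> carries weight \<open>w(h\<^sub>0) > B\<close>, let \<open>U\<close> be the set of vertices
  reachable from the target of \<open>h\<^sub>0\<close> along half-edges \<open>h\<close> with \<open>w(h) t(h) \<ge> 0\<close>. If \<open>U\<close>
  contained the source of \<open>h\<^sub>0\<close>, a cycle through \<open>h\<^sub>0\<close> would violate its cycle equation.
  Otherwise every half-edge leaving \<open>U\<close> has negative weight, among them \<open>i(h\<^sub>0)\<close> with
  weight \<open>< -B\<close>; but summing the vertex conditions over \<open>U\<close> shows that the weights leaving
  \<open>U\<close> add up to at least \<open>-B\<close>. Hence \<open>t\<close> vanishes on all edges of weight larger than \<open>B\<close>,
  so \<open>c\<^sub>w\<close> only depends on the weights truncated at \<open>B\<close> and on the set of heavy edges,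
  which range over a finite set.
\<close>

fun walk :: "('h \<Rightarrow> 'v) \<Rightarrow> ('h \<Rightarrow> 'h) \<Rightarrow> 'v \<Rightarrow> 'h list \<Rightarrow> 'v \<Rightarrow> bool" where
  "walk e i x [] y \<longleftrightarrow> x = y"
| "walk e i x (h # p) y \<longleftrightarrow> e h = x \<and> walk e i (e (i h)) p y"

lemma walk_drop:
  "walk e i x q y \<Longrightarrow> j < length q \<Longrightarrow> walk e i (e (q ! j)) (drop j q) y"
proof (induction q arbitrary: x j)
  case (Cons a q)
  then show ?case by (cases j) auto
qed simp

lemma walk_nth:
  "walk e i x c y \<Longrightarrow> j < length c \<Longrightarrow>
     e (i (c ! j)) = (if j + 1 < length c then e (c ! (j + 1)) else y)"
proof (induction c arbitrary: x j)
  case (Cons a q)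
  then show ?case by (cases j; cases q) auto
qed simp

lemma closed_walk_nth:
  assumes "walk e i x c x" "j < length c"
  shows "e (i (c ! j)) = e (c ! ((j + 1) mod length c))"
proof (cases "j + 1 < length c")
  case False
  with assms have "j + 1 = length c" by simp
  with assms show ?thesis by (cases c) (auto simp: walk_nth)
qed (use walk_nth[OF assms] in simp)

lemma rtrancl_adj_simple_walk:
  assumes "(x, y) \<in> (adj G e i)\<^sup>*"
  shows "\<exists>q. walk e i x q y \<and> set q \<subseteq> G \<and> (\<forall>h\<in>set q. i h \<noteq> h)
           \<and> distinct (map e q) \<and> y \<notin> e ` set q"
  using assms
proof (induction rule: converse_rtrancl_induct)
  case base
  show ?case by (intro exI[of _ "[]"]) simp
next
  case (step x x')
  then obtain h where h: "h \<in> G" "i h \<noteq> h" "e h = x" "e (i h) = x'"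
    by (auto simp: adj_def)
  from step obtain q where q: "walk e i x' q y" "set q \<subseteq> G" "\<forall>h\<in>set q. i h \<noteq> h"
      "distinct (map e q)" "y \<notin> e ` set q"
    by blast
  consider "x = y" | "x \<noteq> y" "x \<in> e ` set q" | "x \<noteq> y" "x \<notin> e ` set q" by blast
  then show ?case
  proof cases
    case 1
    then show ?thesis by (intro exI[of _ "[]"]) simp
  next
    case 2
    \<comment> \<open>the vertex \<open>x\<close> is revisited: shortcut to the suffix of \<open>q\<close> starting there\<close>
    then obtain j where j: "j < length q" "e (q ! j) = x" by (auto simp: in_set_conv_nth)
    have "walk e i x (drop j q) y" using walk_drop[OF q(1) j(1)] j(2) by simp
    moreover have "distinct (map e (drop j q))" using q(4) by (simp add: drop_map[symmetric])
    ultimately show ?thesis using q(2,3,5) set_drop_subset[of j q] by blast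
  next
    case 3
    then show ?thesis using h q by (intro exI[of _ "h # q"]) auto
  qed
qed

lemma mod_succ_succ_eq_imp_two:
  fixes i j n :: nat
  assumes "i < n" "j < n" "i \<noteq> j" "j = (i + 1) mod n" "i = (j + 1) mod n"
  shows "n = 2"
  using assms
  by (metis add.right_neutral add_Suc_right less_add_one linorder_neqE_nat mod_less mod_self
      not_add_less1 not_less_eq not_mod2_eq_Suc_0_eq_0 one_add_one zero_neq_one)

lemma closed_walk_repeated_edge:
  assumes walk: "walk endp iv x c x"
    and dist: "distinct (map endp c)"
    and inv: "\<forall>h\<in>set c. iv (iv h) = h"
    and ij: "i < length c" "j < length c" "i \<noteq> j"
    and eq: "{c ! i, iv (c ! i)} = {c ! j, iv (c ! j)}"
  shows "length c = 2 \<and> c ! 1 = iv (c ! 0)"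
proof -
  let ?n = "length c"
  have idx: "a = b" if "a < ?n" "b < ?n" "endp (c ! a) = endp (c ! b)" for a b
    using dist that by (metis length_map nth_eq_iff_index_eq nth_map)
  have "c ! j \<noteq> c ! i" using idx ij by metis
  with eq have cj: "c ! j = iv (c ! i)" by blast
  with inv ij have ci: "iv (c ! j) = c ! i" by auto
  have succ_lt: "(a + 1) mod ?n < ?n" for a using ij(1) by (intro mod_less_divisor) auto
  have "endp (c ! j) = endp (c ! ((i + 1) mod ?n))"
    using closed_walk_nth[OF walk ij(1)] cj by simp
  then have "j = (i + 1) mod ?n" using idx[OF ij(2) succ_lt] by blast
  moreover have "endp (c ! i) = endp (c ! ((j + 1) mod ?n))"
    using closed_walk_nth[OF walk ij(2)] ci by simp
  then have "i = (j + 1) mod ?n" using idx[OF ij(1) succ_lt] by blast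
  ultimately have n: "?n = 2" using mod_succ_succ_eq_imp_two[OF ij] by blast
  with ij have "(i = 0 \<and> j = 1) \<or> (i = 1 \<and> j = 0)" by auto
  with n cj ci show ?thesis by auto
qed

lemma closed_walk_is_cycle:
  assumes walk: "walk endp iv x c x"
    and H: "set c \<subseteq> H"
    and nonleg: "\<forall>h\<in>set c. iv h \<noteq> h \<and> iv (iv h) = h"
    and dist: "distinct (map endp c)"
    and nonempty: "c \<noteq> []"
    and not_back: "\<not> (length c = 2 \<and> c ! 1 = iv (c ! 0))"
  shows "is_cycle H endp iv c"
proof -
  have "distinct (map (\<lambda>h. {h, iv h}) c)"
    unfolding distinct_conv_nth length_map
  proof (intro allI impI)
    fix i j assume ij: "i < length c" "j < length c" "i \<noteq> j"
    show "map (\<lambda>h. {h, iv h}) c ! i \<noteq> map (\<lambda>h. {h, iv h}) c ! j"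
    proof
      assume "map (\<lambda>h. {h, iv h}) c ! i = map (\<lambda>h. {h, iv h}) c ! j"
      then have "{c ! i, iv (c ! i)} = {c ! j, iv (c ! j)}" using ij by simp
      with closed_walk_repeated_edge[OF walk dist _ ij] nonleg not_back show False by blast
    qed
  qed
  then show ?thesis
    unfolding is_cycle_def using H nonleg dist nonempty closed_walk_nth[OF walk] by blast
qed

definition out_half_edges :: "'h set \<Rightarrow> ('h \<Rightarrow> 'v) \<Rightarrow> ('h \<Rightarrow> 'h) \<Rightarrow> 'v set \<Rightarrow> 'h set" where
  "out_half_edges H endp iv U = {h\<in>H. endp h \<in> U \<and> iv h \<noteq> h \<and> endp (iv h) \<notin> U}"

text \<open>Summing the vertex conditions over \<open>U\<close>, the edges inside \<open>U\<close> cancel in pairs.\<close>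

lemma sum_out_half_edges:
  assumes G: "is_graph V H endp iv" and W: "is_weighting V H endp iv gv k w" and U: "U \<subseteq> V"
  shows "sum w (out_half_edges H endp iv U) =
           - (\<Sum>v\<in>U. k * kappa H endp iv gv v) - sum w {h\<in>legs H iv. endp h \<in> U}"
proof -
  have fV: "finite V" and fH: "finite H" and ivH: "\<forall>h\<in>H. iv h \<in> H \<and> iv (iv h) = h"
    using G by (auto simp: is_graph_def)
  have anti: "\<forall>h\<in>H. iv h \<noteq> h \<longrightarrow> w h + w (iv h) = 0"
    and vert: "\<forall>v\<in>V. sum w {h\<in>H. endp h = v} + k * kappa H endp iv gv v = 0"
    using W by (auto simp: is_weighting_def)
  define A where "A = {h\<in>H. endp h \<in> U}"
  define L where "L = {h\<in>legs H iv. endp h \<in> U}"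
  define I where "I = {h\<in>A. iv h \<noteq> h \<and> endp (iv h) \<in> U}"
  let ?O = "out_half_edges H endp iv U"
  have fA: "finite A" using fH by (simp add: A_def)
  have "A = L \<union> (I \<union> ?O)" "L \<inter> (I \<union> ?O) = {}" "I \<inter> ?O = {}"
    by (auto simp: A_def L_def I_def legs_def out_half_edges_def)
  with fA have split: "sum w A = sum w L + sum w I + sum w ?O"
    by (simp add: sum.union_disjoint)
  have "endp ` A \<subseteq> U" by (auto simp: A_def)
  from sum.group[OF fA finite_subset[OF U fV] this, of w]
  have "sum w A = (\<Sum>v\<in>U. sum w {h\<in>A. endp h = v})" by simp
  also have "\<dots> = (\<Sum>v\<in>U. - (k * kappa H endp iv gv v))"
  proof (rule sum.cong[OF refl])
    fix v assume "v \<in> U"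
    then have "{h\<in>A. endp h = v} = {h\<in>H. endp h = v}" by (auto simp: A_def)
    with vert U \<open>v \<in> U\<close> show "sum w {h\<in>A. endp h = v} = - (k * kappa H endp iv gv v)"
      by (auto simp: eq_neg_iff_add_eq_0)
  qed
  also have "\<dots> = - (\<Sum>v\<in>U. k * kappa H endp iv gv v)" by (rule sum_negf)
  finally have sA: "sum w A = - (\<Sum>v\<in>U. k * kappa H endp iv gv v)" .
  have "bij_betw iv I I"
    by (rule bij_betw_byWitness[where f'=iv]) (use ivH in \<open>auto simp: I_def A_def\<close>)
  then have "sum w I = sum (\<lambda>h. w (iv h)) I" by (simp add: sum.reindex_bij_betw)
  also have "\<dots> = sum (\<lambda>h. - w h) I"
    using anti by (intro sum.cong) (auto simp: I_def A_def eq_neg_iff_add_eq_0 add.commute)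
  finally have "sum w I = 0" by (simp add: sum_negf)
  with split sA show ?thesis unfolding L_def by linarith
qed

definition weight_bound :: "'v set \<Rightarrow> 'h set \<Rightarrow> ('h \<Rightarrow> 'v) \<Rightarrow> ('h \<Rightarrow> 'h) \<Rightarrow> ('v \<Rightarrow> nat) \<Rightarrow> int
    \<Rightarrow> ('h \<Rightarrow> int) \<Rightarrow> int" where
  "weight_bound V H endp iv gv k lw =
     (\<Sum>v\<in>V. \<bar>k * kappa H endp iv gv v\<bar>) + (\<Sum>h\<in>legs H iv. \<bar>lw h\<bar>)"

lemma weight_bound_nonneg: "0 \<le> weight_bound V H endp iv gv k lw"
  unfolding weight_bound_def by (intro add_nonneg_nonneg sum_nonneg) auto

lemma sum_out_half_edges_ge:
  assumes G: "is_graph V H endp iv" and W: "w \<in> weightings V H endp iv gv k lw"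
    and U: "U \<subseteq> V"
  shows "- weight_bound V H endp iv gv k lw \<le> sum w (out_half_edges H endp iv U)"
proof -
  have fV: "finite V" and fH: "finite H" using G by (auto simp: is_graph_def)
  let ?L = "{h\<in>legs H iv. endp h \<in> U}" and ?K = "\<lambda>v. k * kappa H endp iv gv v"
  have "\<bar>sum ?K U\<bar> \<le> (\<Sum>v\<in>U. \<bar>?K v\<bar>)" by (rule sum_abs)
  also have "\<dots> \<le> (\<Sum>v\<in>V. \<bar>?K v\<bar>)" by (rule sum_mono2[OF fV U]) auto
  finally have vert: "\<bar>sum ?K U\<bar> \<le> (\<Sum>v\<in>V. \<bar>?K v\<bar>)" .
  have "sum w ?L = sum lw ?L" using W by (auto simp: weightings_def)
  also have "\<bar>\<dots>\<bar> \<le> (\<Sum>h\<in>?L. \<bar>lw h\<bar>)" by (rule sum_abs)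
  also have "\<dots> \<le> (\<Sum>h\<in>legs H iv. \<bar>lw h\<bar>)"
    by (rule sum_mono2) (use fH in \<open>auto simp: legs_def\<close>)
  finally have legs: "\<bar>sum w ?L\<bar> \<le> (\<Sum>h\<in>legs H iv. \<bar>lw h\<bar>)" .
  have "is_weighting V H endp iv gv k w" using W by (simp add: weightings_def)
  from sum_out_half_edges[OF G this U] vert legs show ?thesis
    unfolding weight_bound_def by linarith
qed

definition nonneg_half_edges ::
    "'h set \<Rightarrow> ('h \<Rightarrow> 'h) \<Rightarrow> ('h \<Rightarrow> int) \<Rightarrow> ('h set \<Rightarrow> rat) \<Rightarrow> 'h set" where
  "nonneg_half_edges H iv w t = {h\<in>H. iv h \<noteq> h \<and> 0 \<le> of_int (w h) * t {h, iv h}}"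

lemma cone_w_no_nonneg_return_path:
  assumes G: "is_graph V H endp iv" and W: "is_weighting V H endp iv gv k w"
    and T: "t \<in> cone_w H endp iv w"
    and h0: "h0 \<in> H" "iv h0 \<noteq> h0" "0 < of_int (w h0) * t {h0, iv h0}"
  shows "(endp (iv h0), endp h0) \<notin> (adj (nonneg_half_edges H iv w t) endp iv)\<^sup>*"
proof
  let ?N = "nonneg_half_edges H iv w t"
  have ivH: "\<forall>h\<in>H. iv h \<in> H \<and> iv (iv h) = h" using G by (simp add: is_graph_def)
  assume "(endp (iv h0), endp h0) \<in> (adj ?N endp iv)\<^sup>*"
  from rtrancl_adj_simple_walk[OF this] obtain q
    where q: "walk endp iv (endp (iv h0)) q (endp h0)" "set q \<subseteq> ?N"
      "distinct (map endp q)" "endp h0 \<notin> endp ` set q"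
    by blast
  have qN: "\<forall>h\<in>set q. h \<in> H \<and> iv h \<noteq> h" using q(2) by (auto simp: nonneg_half_edges_def)
  have "w h0 + w (iv h0) = 0" using W h0 by (simp add: is_weighting_def)
  then have "w (iv h0) = - w h0" by linarith
  moreover have "{iv h0, iv (iv h0)} = {h0, iv h0}" using ivH h0 by auto
  ultimately have "iv h0 \<notin> ?N" using h0(3) by (simp add: nonneg_half_edges_def)
  then have not_back: "\<not> (length (h0 # q) = 2 \<and> (h0 # q) ! 1 = iv ((h0 # q) ! 0))"
    using q(2) by (cases q) auto
  have walk: "walk endp iv (endp h0) (h0 # q) (endp h0)" using q(1) by simp
  have dist: "distinct (map endp (h0 # q))" using q(3,4) by simp
  have H: "set (h0 # q) \<subseteq> H" and nonleg: "\<forall>h\<in>set (h0 # q). iv h \<noteq> h \<and> iv (iv h) = h"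
    using qN h0 ivH by auto
  have cycle: "is_cycle H endp iv (h0 # q)"
    using closed_walk_is_cycle[OF walk H nonleg dist _ not_back] by simp
  define cycle_sum where
    "cycle_sum c = (\<Sum>j<length c. of_int (w (c ! j)) * t {c ! j, iv (c ! j)})" for c
  have "cycle_sum (h0 # q) = of_int (w h0) * t {h0, iv h0} + cycle_sum q"
    unfolding cycle_sum_def by (simp only: length_Cons sum.lessThan_Suc_shift nth_Cons_0 nth_Cons_Suc)
  moreover have "0 \<le> cycle_sum q"
    unfolding cycle_sum_def using q(2)
    by (intro sum_nonneg) (auto simp: nonneg_half_edges_def dest!: nth_mem)
  moreover have "cycle_sum (h0 # q) = 0"
    using T cycle unfolding cone_w_def cycle_sum_def by blast
  ultimately show False using h0(3) by linarith
qed

lemma cone_w_positive_term_le_weight_bound: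
  assumes G: "is_graph V H endp iv" and W: "w \<in> weightings V H endp iv gv k lw"
    and T: "t \<in> cone_w H endp iv w"
    and h0: "h0 \<in> H" "iv h0 \<noteq> h0" "0 < of_int (w h0) * t {h0, iv h0}"
  shows "w h0 \<le> weight_bound V H endp iv gv k lw"
proof -
  let ?N = "nonneg_half_edges H iv w t"
  define U where "U = (adj ?N endp iv)\<^sup>* `` {endp (iv h0)}"
  have eV: "\<forall>h\<in>H. endp h \<in> V" and ivH: "\<forall>h\<in>H. iv h \<in> H \<and> iv (iv h) = h"
    using G by (auto simp: is_graph_def)
  have Wt: "is_weighting V H endp iv gv k w" using W by (simp add: weightings_def)
  have closed: "endp (iv h) \<in> U" if "h \<in> ?N" "endp h \<in> U" for h
    using that unfolding U_def adj_def nonneg_half_edges_def by (auto intro: rtrancl_into_rtrancl)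
  have "endp h0 \<notin> U"
    using cone_w_no_nonneg_return_path[OF G Wt T h0] by (simp add: U_def)
  then have iv_h0_out: "iv h0 \<in> out_half_edges H endp iv U"
    using ivH h0 by (simp add: out_half_edges_def U_def)
  have "U \<subseteq> V"
  proof
    fix u assume "u \<in> U"
    then have "(endp (iv h0), u) \<in> (adj ?N endp iv)\<^sup>*" by (simp add: U_def)
    then show "u \<in> V"
      by (induction rule: rtrancl_induct)
        (use eV ivH h0 in \<open>auto simp: adj_def nonneg_half_edges_def\<close>)
  qed
  have out_nonpos: "w h \<le> 0" if "h \<in> out_half_edges H endp iv U" for h
  proof -
    from that closed have "h \<notin> ?N" by (auto simp: out_half_edges_def)
    with that have "of_int (w h) * t {h, iv h} < 0"
      by (auto simp: out_half_edges_def nonneg_half_edges_def)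
    moreover have "0 \<le> t {h, iv h}"
      using T that by (auto simp: cone_w_def edges_def out_half_edges_def)
    ultimately show ?thesis by (auto simp: mult_less_0_iff)
  qed
  have fin: "finite (out_half_edges H endp iv U)"
    using G by (simp add: is_graph_def out_half_edges_def)
  have "sum w (out_half_edges H endp iv U) \<le> w (iv h0)"
    using sum_nonpos[of "out_half_edges H endp iv U - {iv h0}" w] out_nonpos
    by (simp add: sum.remove[OF fin iv_h0_out])
  also have "\<dots> = - w h0" using Wt h0 by (force simp: is_weighting_def eq_neg_iff_add_eq_0)
  finally show ?thesis using sum_out_half_edges_ge[OF G W \<open>U \<subseteq> V\<close>] by linarith
qed

lemma cone_w_vanishes_on_heavy_edge:
  assumes G: "is_graph V H endp iv" and W: "w \<in> weightings V H endp iv gv k lw"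
    and T: "t \<in> cone_w H endp iv w"
    and h: "h \<in> H" "iv h \<noteq> h" "weight_bound V H endp iv gv k lw < \<bar>w h\<bar>"
  shows "t {h, iv h} = 0"
proof (rule ccontr)
  assume "t {h, iv h} \<noteq> 0"
  moreover have "0 \<le> t {h, iv h}" using T h by (auto simp: cone_w_def edges_def)
  ultimately have t_pos: "0 < t {h, iv h}" by simp
  have ivh: "iv h \<in> H" "iv (iv h) = h" "iv (iv h) \<noteq> iv h"
    using G h by (auto simp: is_graph_def)
  have wiv: "w (iv h) = - w h"
    using W h by (force simp: weightings_def is_weighting_def eq_neg_iff_add_eq_0)
  show False
  proof (cases "0 < w h")
    case True
    with t_pos have "0 < of_int (w h) * t {h, iv h}" by simp
    from cone_w_positive_term_le_weight_bound[OF G W T h(1,2) this] True h(3) show False by simp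
  next
    case False
    with h(3) weight_bound_nonneg[of V H endp iv gv k lw] have neg: "w h < 0" by linarith
    have "{iv h, iv (iv h)} = {h, iv h}" using ivh by auto
    with neg wiv t_pos have "0 < of_int (w (iv h)) * t {iv h, iv (iv h)}"
      by (simp add: mult_neg_pos)
    from cone_w_positive_term_le_weight_bound[OF G W T ivh(1,3) this] h(3) wiv neg
    show False by simp
  qed
qed

definition cone_vanishing_on :: "'h set \<Rightarrow> ('h \<Rightarrow> 'v) \<Rightarrow> ('h \<Rightarrow> 'h) \<Rightarrow> ('h \<Rightarrow> int) \<Rightarrow> 'h set
    \<Rightarrow> ('h set \<Rightarrow> rat) set" where
  "cone_vanishing_on H endp iv w S = {t \<in> cone_w H endp iv w. \<forall>h\<in>S. t {h, iv h} = 0}"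

lemma cone_vanishing_on_cong:
  fixes iv :: "'h \<Rightarrow> 'h" and w w' :: "'h \<Rightarrow> int"
  assumes "\<And>h. h \<in> H \<Longrightarrow> iv h \<noteq> h \<Longrightarrow> h \<notin> S \<Longrightarrow> w h = w' h"
  shows "cone_vanishing_on H endp iv w S = cone_vanishing_on H endp iv w' S"
proof -
  have "(\<Sum>j<length c. of_int (w (c ! j)) * t {c ! j, iv (c ! j)})
      = (\<Sum>j<length c. of_int (w' (c ! j)) * t {c ! j, iv (c ! j)})"
    if "is_cycle H endp iv c" "\<forall>h\<in>S. t {h, iv h} = 0" for c and t :: "'h set \<Rightarrow> rat"
  proof (rule sum.cong[OF refl])
    fix j assume "j \<in> {..<length c}"
    with \<open>is_cycle H endp iv c\<close> have "c ! j \<in> H" "iv (c ! j) \<noteq> c ! j"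
      by (auto simp: is_cycle_def dest!: nth_mem)
    with assms that(2) show "of_int (w (c ! j)) * t {c ! j, iv (c ! j)}
        = of_int (w' (c ! j)) * t {c ! j, iv (c ! j)}" by (cases "c ! j \<in> S") auto
  qed
  then show ?thesis by (auto simp: cone_vanishing_on_def cone_w_def)
qed

lemma cone_w_eq_truncated:
  assumes G: "is_graph V H endp iv" and W: "w \<in> weightings V H endp iv gv k lw"
    and B: "B = weight_bound V H endp iv gv k lw"
  shows "cone_w H endp iv w =
           cone_vanishing_on H endp iv (\<lambda>h. if h \<in> H \<and> \<bar>w h\<bar> \<le> B then w h else 0)
             {h\<in>H. iv h \<noteq> h \<and> B < \<bar>w h\<bar>}"
proof -
  have "cone_w H endp iv w = cone_vanishing_on H endp iv w {h\<in>H. iv h \<noteq> h \<and> B < \<bar>w h\<bar>}"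
    unfolding cone_vanishing_on_def B using cone_w_vanishes_on_heavy_edge[OF G W] by blast
  also have "\<dots> = cone_vanishing_on H endp iv (\<lambda>h. if h \<in> H \<and> \<bar>w h\<bar> \<le> B then w h else 0)
                    {h\<in>H. iv h \<noteq> h \<and> B < \<bar>w h\<bar>}"
    by (rule cone_vanishing_on_cong) simp
  finally show ?thesis .
qed

theorem lemma3p8:
  fixes V :: "'v set" and H :: "'h set" and endp :: "'h \<Rightarrow> 'v" and iv :: "'h \<Rightarrow> 'h"
    and gv :: "'v \<Rightarrow> nat" and k :: int and lw :: "'h \<Rightarrow> int"
  assumes "is_graph V H endp iv"
    and "connected_graph V H endp iv"
    and "leg_weighted V H endp iv gv k lw"
  shows "finite ((\<lambda>w. cone_w H endp iv w) ` weightings V H endp iv gv k lw)"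
proof -
  define B where "B = weight_bound V H endp iv gv k lw"
  define truncated where
    "truncated = {f :: 'h \<Rightarrow> int. \<forall>h. (h \<in> H \<longrightarrow> f h \<in> {-B..B}) \<and> (h \<notin> H \<longrightarrow> f h = 0)}"
  let ?cones = "(\<lambda>(f, S). cone_vanishing_on H endp iv f S) ` (truncated \<times> Pow H)"
  have "finite H" using assms(1) by (simp add: is_graph_def)
  then have "finite ?cones"
    unfolding truncated_def
    by (intro finite_imageI finite_cartesian_product finite_set_of_finite_funs) auto
  moreover have "cone_w H endp iv w \<in> ?cones" if "w \<in> weightings V H endp iv gv k lw" for w
    using cone_w_eq_truncated[OF assms(1) that B_def] weight_bound_nonneg[of V H endp iv gv k lw]
    by (auto simp: truncated_def B_def intro!: image_eqI)
  ultimately show ?thesis by (meson finite_subset image_subsetI)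
qed

end
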